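(* Let $F:\mathbb{S}^{n\times n}\to\mathbb{R}$ satisfy (F1), (F2) and (F3). Then there are smooth functions $F_\varepsilon:\mathbb{S}^{n\times n}\to\mathbb{R}$ converging to $F$ uniformly in $Lip(\mathbb{S}^{n\times n})$ as $\varepsilon\to0$, each satisfying (F1) and (F3), and such that $|DF_\varepsilon(z)\cdot z-F_\varepsilon(z)|\le\sqrt n\Lambda\varepsilon$ for all $z\in\mathbb{S}^{n\times n}$.
   Context: $\mathbb{S}^{n\times n}$ is the space of real symmetric $n\times n$ matrices; $DF_\varepsilon(z)\cdot z$ denotes the Frobenius pairing of the derivative with $z$. For $0<\lambda\le\Lambda$, $\mathcal M^\pm$ are the Pucci operators. (F1): $\mathcal M^-(M-N)\le F(M)-F(N)\le\mathcal M^+(M-N)$. (F2): $F(tM)=tF(M)$ for $t\ge0$. (F3): $F$ is concave. *)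

theory Defs
  imports "HOL-Analysis.Analysis"
begin

definition sym_mats :: "(real^'n^'n) set" where
  "sym_mats = {M. transpose M = M}"

definition symmetrize :: "real^'n^'n \<Rightarrow> real^'n^'n" where
  "symmetrize M = (1/2) *\<^sub>R (M + transpose M)"

definition ellip_class :: "real \<Rightarrow> real \<Rightarrow> (real^'n^'n) set" where
  "ellip_class lam Lam = {A. transpose A = A \<and>
     (\<forall>\<xi>::real^'n. lam * (\<xi> \<bullet> \<xi>) \<le> \<xi> \<bullet> (A *v \<xi>) \<and> \<xi> \<bullet> (A *v \<xi>) \<le> Lam * (\<xi> \<bullet> \<xi>))}"

definition pucci_plus :: "real \<Rightarrow> real \<Rightarrow> real^'n^'n \<Rightarrow> real" where
  "pucci_plus lam Lam M = (SUP A \<in> ellip_class lam Lam. trace (A ** M))"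

definition pucci_minus :: "real \<Rightarrow> real \<Rightarrow> real^'n^'n \<Rightarrow> real" where
  "pucci_minus lam Lam M = (INF A \<in> ellip_class lam Lam. trace (A ** M))"

definition F1 :: "real \<Rightarrow> real \<Rightarrow> (real^'n^'n \<Rightarrow> real) \<Rightarrow> bool" where
  "F1 lam Lam F \<longleftrightarrow> (\<forall>M\<in>sym_mats. \<forall>N\<in>sym_mats.
      pucci_minus lam Lam (M - N) \<le> F M - F N \<and> F M - F N \<le> pucci_plus lam Lam (M - N))"

definition F2 :: "(real^'n^'n \<Rightarrow> real) \<Rightarrow> bool" where
  "F2 F \<longleftrightarrow> (\<forall>M\<in>sym_mats. \<forall>t::real. t \<ge> 0 \<longrightarrow> F (t *\<^sub>R M) = t * F M)"

definition F3 :: "(real^'n^'n \<Rightarrow> real) \<Rightarrow> bool" where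
  "F3 F \<longleftrightarrow> concave_on sym_mats F"

fun iter_dderiv :: "'a::real_normed_vector list \<Rightarrow> ('a \<Rightarrow> real) \<Rightarrow> 'a \<Rightarrow> real" where
  "iter_dderiv [] f = f"
| "iter_dderiv (v # vs) f = (\<lambda>x. frechet_derivative (iter_dderiv vs f) (at x) v)"

definition smooth_fun :: "('a::real_normed_vector \<Rightarrow> real) \<Rightarrow> bool" where
  "smooth_fun f \<longleftrightarrow> (\<forall>vs. continuous_on UNIV (iter_dderiv vs f) \<and> iter_dderiv vs f differentiable_on UNIV)"

text \<open>A function on symmetric matrices is smooth iff its composition with the
  symmetrization projection is smooth on the whole matrix space.\<close>
definition smooth_on_sym :: "(real^'n^'n \<Rightarrow> real) \<Rightarrow> bool" where
  "smooth_on_sym f \<longleftrightarrow> smooth_fun (\<lambda>M. f (symmetrize M))"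

end

theory Submission
  imports Defs "HOL-Computational_Algebra.Polynomial"
begin

text \<open>Extend \<open>F\<close> to all matrices by \<open>G X = F (symmetrize X)\<close>. By (F1) and the entrywise bound
  \<open>|P\<^sup>\<plusminus>(X)| \<le> \<Lambda> n\<^sup>2 max |X\<^sub>i\<^sub>j|\<close>, \<open>G\<close> is \<open>\<Lambda> n\<^sup>2\<close>-Lipschitz; it is also positively
  homogeneous and concave. Average it against a smooth probability density \<open>\<rho>\<close> supported in the
  unit ball: \<open>G\<^sub>r x = \<integral> G (x - r w) \<rho> w dw\<close>. Averaging preserves two-sided bounds on differences
  \<open>G x - G y\<close> in terms of \<open>x - y\<close> (hence (F1) and the Lipschitz bound) as well as concavity, and moves
  \<open>G\<close> by at most \<open>\<Lambda> n\<^sup>2 r\<close>. Homogeneity survives only approximately,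
  \<open>|G\<^sub>r (t x) - t G\<^sub>r x| \<le> \<Lambda> n\<^sup>2 r |t - 1|\<close>, and differentiating in \<open>t\<close> at \<open>t = 1\<close> bounds the
  Euler defect \<open>|DG\<^sub>r(z)\<cdot>z - G\<^sub>r z|\<close> by \<open>\<Lambda> n\<^sup>2 r\<close>. Smoothness also uses homogeneity:
  \<open>G\<^sub>r x = r (G * \<rho>)(x / r)\<close>, and a derivative of a convolution with a bump is again a convolution
  with a bump. Finally take \<open>r = \<surd>n \<epsilon> / n\<^sup>2\<close>.\<close>

section \<open>A smooth bump profile\<close>

definition poly_exp_inv :: "real poly \<Rightarrow> real \<Rightarrow> real" where
  "poly_exp_inv P t = (if t > 0 then poly P (1/t) * exp (-(1/t)) else 0)"

definition exp_inv_deriv_poly :: "real poly \<Rightarrow> real poly" where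
  "exp_inv_deriv_poly P = [:0,0,1:] * (P - pderiv P)"

lemma poly_div_exp_tendsto_0: "((\<lambda>u. poly Q u / exp u) \<longlongrightarrow> (0::real)) at_top"
proof -
  have "((\<lambda>u. \<Sum>i\<le>degree Q. coeff Q i * (u ^ i / exp u)) \<longlongrightarrow> 0) at_top"
    by (intro tendsto_null_sum tendsto_mult_right_zero tendsto_power_div_exp_0)
  moreover have "(\<lambda>u. poly Q u / exp u) = (\<lambda>u. \<Sum>i\<le>degree Q. coeff Q i * (u ^ i / exp u))"
    by (auto simp: poly_altdef sum_divide_distrib)
  ultimately show ?thesis
    by simp
qed

lemma poly_exp_inv_div_tendsto_0: "((\<lambda>y. poly_exp_inv P y / y) \<longlongrightarrow> 0) (at (0::real))"
proof -
  have left: "((\<lambda>y. poly_exp_inv P y / y) \<longlongrightarrow> 0) (at_left (0::real))"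
    by (rule tendsto_eventually)
      (auto simp: eventually_at_left_field poly_exp_inv_def intro!: exI[of _ "-1"])
  have "((\<lambda>y. poly ([:0,1:] * P) (inverse y) / exp (inverse y)) \<longlongrightarrow> (0::real)) (at_right 0)"
    using filterlim_compose[OF poly_div_exp_tendsto_0 filterlim_inverse_at_top_right]
    by (simp only: o_def)
  moreover have "\<forall>\<^sub>F y in at_right 0.
      poly ([:0,1:] * P) (inverse y) / exp (inverse y) = poly_exp_inv P y / y"
    unfolding eventually_at_right_field
    by (auto simp: poly_exp_inv_def exp_minus field_simps intro!: exI[of _ 1])
  ultimately have "((\<lambda>y. poly_exp_inv P y / y) \<longlongrightarrow> 0) (at_right (0::real))"
    by (rule Lim_transform_eventually)
  with left show ?thesis by (simp add: filterlim_split_at)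
qed

lemma poly_exp_inv_has_derivative:
  "(poly_exp_inv P has_real_derivative poly_exp_inv (exp_inv_deriv_poly P) t) (at t)"
proof (cases t "0::real" rule: linorder_cases)
  case greater
  have "((\<lambda>t. poly P (1/t) * exp (-(1/t))) has_real_derivative
      poly (pderiv P) (1/t) * (-(1/t^2)) * exp (-(1/t)) + poly P (1/t) * (exp (-(1/t)) * (1/t^2))) (at t)"
    using greater
    by (auto intro!: derivative_eq_intros DERIV_chain2[OF poly_DERIV]
        simp: power2_eq_square field_simps)
  moreover have "poly (pderiv P) (1/t) * (-(1/t^2)) * exp (-(1/t)) + poly P (1/t) * (exp (-(1/t)) * (1/t^2))
      = poly_exp_inv (exp_inv_deriv_poly P) t"
    using greater by (simp add: poly_exp_inv_def exp_inv_deriv_poly_def algebra_simps power2_eq_square)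
  ultimately have "((\<lambda>t. poly P (1/t) * exp (-(1/t))) has_real_derivative
      poly_exp_inv (exp_inv_deriv_poly P) t) (at t)"
    by simp
  then show ?thesis
    by (rule has_field_derivative_transform_within_open[of _ _ _ "{0<..}"])
      (use greater in \<open>auto simp: poly_exp_inv_def\<close>)
next
  case less
  then have "((\<lambda>_. 0) has_real_derivative poly_exp_inv (exp_inv_deriv_poly P) t) (at t)"
    by (simp add: poly_exp_inv_def)
  then show ?thesis
    by (rule has_field_derivative_transform_within_open[of _ _ _ "{..<0}"])
      (use less in \<open>auto simp: poly_exp_inv_def\<close>)
next
  case equal
  have "(poly_exp_inv P has_real_derivative 0) (at 0)"
    unfolding has_field_derivative_iff using poly_exp_inv_div_tendsto_0[of P]
    by (simp add: poly_exp_inv_def)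
  with equal show ?thesis by (simp add: poly_exp_inv_def)
qed

text \<open>For \<open>s < 1\<close>, \<open>bump_profile 0 s = exp (-1/(1 - s))\<close> and \<open>bump_profile k\<close> is its
  \<open>k\<close>-th derivative; all of them vanish for \<open>s \<ge> 1\<close>.\<close>

definition bump_profile :: "nat \<Rightarrow> real \<Rightarrow> real" where
  "bump_profile k s = (-1)^k * poly_exp_inv ((exp_inv_deriv_poly ^^ k) 1) (1 - s)"

lemma bump_profile_has_derivative: "(bump_profile k has_real_derivative bump_profile (Suc k) s) (at s)"
  unfolding bump_profile_def
  by (auto intro!: derivative_eq_intros DERIV_chain2[OF poly_exp_inv_has_derivative])

lemma bump_profile_eq_0: "s \<ge> 1 \<Longrightarrow> bump_profile k s = 0"
  by (simp add: bump_profile_def poly_exp_inv_def)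

lemma bump_profile_0_nonneg: "bump_profile 0 s \<ge> 0"
  by (simp add: bump_profile_def poly_exp_inv_def)

lemma bump_profile_0_pos: "s < 1 \<Longrightarrow> bump_profile 0 s > 0"
  by (simp add: bump_profile_def poly_exp_inv_def)

section \<open>Bump functions\<close>

text \<open>Smooth functions supported in the open unit ball, with generators chosen so that the set is
  closed under directional derivatives.\<close>

inductive_set bump_funs :: "('a::euclidean_space \<Rightarrow> real) set" where
  profile: "(\<lambda>x. bump_profile k (x \<bullet> x)) \<in> bump_funs"
| inner_mult: "f \<in> bump_funs \<Longrightarrow> (\<lambda>x. (x \<bullet> w) * f x) \<in> bump_funs"
| add: "f \<in> bump_funs \<Longrightarrow> g \<in> bump_funs \<Longrightarrow> (\<lambda>x. f x + g x) \<in> bump_funs"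
| scale: "f \<in> bump_funs \<Longrightarrow> (\<lambda>x. c * f x) \<in> bump_funs"

lemma bump_funs_has_derivative:
  assumes "f \<in> bump_funs"
  shows "\<exists>D. (\<forall>x. (f has_derivative D x) (at x)) \<and> (\<forall>v. (\<lambda>x. D x v) \<in> bump_funs)"
  using assms
proof induction
  case (profile k)
  let ?D = "\<lambda>x h. (x \<bullet> (2 *\<^sub>R h)) * bump_profile (Suc k) (x \<bullet> x)"
  have "((\<lambda>x. bump_profile k (x \<bullet> x)) has_derivative ?D x) (at x)" for x :: 'a
    by (rule DERIV_compose_FDERIV[OF bump_profile_has_derivative, THEN has_derivative_eq_rhs])
      (auto intro!: derivative_eq_intros simp: inner_commute)
  moreover have "(\<lambda>x. ?D x v) \<in> bump_funs" for v
    by (intro bump_funs.inner_mult bump_funs.profile)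
  ultimately show ?case by (intro exI[of _ ?D]) auto
next
  case (inner_mult f w)
  then obtain D where D: "\<And>x. (f has_derivative D x) (at x)" "\<And>v. (\<lambda>x. D x v) \<in> bump_funs"
    by blast
  let ?D = "\<lambda>x h. (x \<bullet> w) * D x h + (h \<bullet> w) * f x"
  have "((\<lambda>x. (x \<bullet> w) * f x) has_derivative ?D x) (at x)" for x
    by (auto intro!: derivative_eq_intros D(1))
  moreover have "(\<lambda>x. ?D x v) \<in> bump_funs" for v
    by (intro bump_funs.intros D(2) inner_mult.hyps)
  ultimately show ?case by (intro exI[of _ ?D]) auto
next
  case (add f g)
  then obtain D E where D: "\<And>x. (f has_derivative D x) (at x)" "\<And>v. (\<lambda>x. D x v) \<in> bump_funs"
    and E: "\<And>x. (g has_derivative E x) (at x)" "\<And>v. (\<lambda>x. E x v) \<in> bump_funs"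
    by blast
  let ?D = "\<lambda>x h. D x h + E x h"
  have "((\<lambda>x. f x + g x) has_derivative ?D x) (at x)" for x
    by (auto intro!: derivative_eq_intros D(1) E(1))
  moreover have "(\<lambda>x. ?D x v) \<in> bump_funs" for v
    by (intro bump_funs.add D(2) E(2))
  ultimately show ?case by (intro exI[of _ ?D]) auto
next
  case (scale f c)
  then obtain D where D: "\<And>x. (f has_derivative D x) (at x)" "\<And>v. (\<lambda>x. D x v) \<in> bump_funs"
    by blast
  let ?D = "\<lambda>x h. c * D x h"
  have "((\<lambda>x. c * f x) has_derivative ?D x) (at x)" for x
    by (auto intro!: derivative_eq_intros D(1))
  moreover have "(\<lambda>x. ?D x v) \<in> bump_funs" for v
    by (intro bump_funs.scale D(2))
  ultimately show ?case by (intro exI[of _ ?D]) auto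
qed

lemma bump_funs_eq_0:
  assumes "f \<in> bump_funs" "norm x \<ge> 1"
  shows "f x = 0"
  using assms(1)
proof induction
  case (profile k)
  have "x \<bullet> x \<ge> 1"
    using assms(2) by (metis norm_ge_zero one_le_power power2_norm_eq_inner)
  then show ?case by (simp add: bump_profile_eq_0)
qed auto

lemma bump_funs_differentiable: "f \<in> bump_funs \<Longrightarrow> f differentiable (at x)"
  using bump_funs_has_derivative unfolding differentiable_def by blast

lemma bump_funs_continuous_on: "f \<in> bump_funs \<Longrightarrow> continuous_on S f"
  by (meson bump_funs_differentiable differentiable_imp_continuous_within
      continuous_at_imp_continuous_on)

lemma bump_funs_frechet_derivative:
  assumes "f \<in> bump_funs"
  shows "(\<lambda>x. frechet_derivative f (at x) v) \<in> bump_funs"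
proof -
  obtain D where D: "\<And>x. (f has_derivative D x) (at x)" "\<And>v. (\<lambda>x. D x v) \<in> bump_funs"
    using bump_funs_has_derivative[OF assms] by blast
  have "(\<lambda>x. frechet_derivative f (at x) v) = (\<lambda>x. D x v)"
    using frechet_derivative_at[OF D(1)] by metis
  with D(2) show ?thesis by simp
qed

lemma bump_funs_derivative_blinfun:
  assumes "\<phi> \<in> bump_funs"
  obtains D\<phi> :: "'a::euclidean_space \<Rightarrow> 'a \<Rightarrow>\<^sub>L real"
  where "continuous_on UNIV D\<phi>" "\<And>z. (\<phi> has_derivative blinfun_apply (D\<phi> z)) (at z)"
proof
  define d where "d i z = frechet_derivative \<phi> (at z) i" for i z
  show "continuous_on UNIV (\<lambda>z. \<Sum>i\<in>Basis. d i z *\<^sub>R blinfun_inner_left i)"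
    unfolding d_def
    by (intro continuous_intros bump_funs_continuous_on bump_funs_frechet_derivative assms)
  fix z
  have "linear (frechet_derivative \<phi> (at z))"
    by (rule linear_frechet_derivative[OF bump_funs_differentiable[OF assms]])
  then have "frechet_derivative \<phi> (at z) h = (\<Sum>i\<in>Basis. d i z *\<^sub>R blinfun_inner_left i) h" for h
    by (subst euclidean_representation[symmetric, of h])
      (simp add: d_def linear_sum linear_scale blinfun.sum_left blinfun.scaleR_left mult.commute)
  then have "blinfun_apply (\<Sum>i\<in>Basis. d i z *\<^sub>R blinfun_inner_left i) = frechet_derivative \<phi> (at z)"
    by auto
  then show "(\<phi> has_derivative blinfun_apply (\<Sum>i\<in>Basis. d i z *\<^sub>R blinfun_inner_left i)) (at z)"
    using frechet_derivative_works bump_funs_differentiable[OF assms] by metis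
qed

section \<open>Convolution with bump functions\<close>

lemma has_integral_UNIV_if_vanishes_outside_cbox:
  fixes f :: "'a::euclidean_space \<Rightarrow> real"
  assumes "continuous_on UNIV f" "\<And>y. y \<notin> cbox a b \<Longrightarrow> f y = 0"
  shows "(f has_integral integral (cbox a b) f) UNIV"
proof (rule has_integral_on_superset[OF integrable_integral])
  show "f integrable_on cbox a b"
    using assms(1) continuous_on_subset integrable_continuous by blast
qed (use assms(2) in auto)

lemma integral_UNIV_reflect_shift:
  fixes f :: "'a::euclidean_space \<Rightarrow> real"
  assumes f: "continuous_on UNIV f" and vanish: "\<And>y. y \<notin> cbox a b \<Longrightarrow> f y = 0"
  shows "integral UNIV (\<lambda>z. f (x - z)) = integral UNIV f"
proof -
  have "(f has_integral integral (cbox a b) f) (cbox a b)"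
    using f continuous_on_subset by (blast intro: integrable_integral integrable_continuous)
  from has_integral_affinity[OF this, of "-1" x]
  have "((\<lambda>z. f (x - z)) has_integral integral (cbox a b) f) ((\<lambda>y. x - y) ` cbox a b)"
    by (simp add: algebra_simps)
  moreover have "f (x - z) = 0" if "z \<notin> (\<lambda>y. x - y) ` cbox a b" for z
    using that vanish[of "x - z"] image_eqI[of z "\<lambda>y. x - y" "x - z"] by auto
  ultimately have "((\<lambda>z. f (x - z)) has_integral integral (cbox a b) f) UNIV"
    by (rule has_integral_on_superset) auto
  moreover have "(f has_integral integral (cbox a b) f) UNIV"
    by (rule has_integral_UNIV_if_vanishes_outside_cbox[OF f vanish])
  ultimately show ?thesis
    by (simp add: integral_unique)
qed

lemma bump_funs_mult_has_integral:
  assumes h: "continuous_on UNIV h" and \<phi>: "\<phi> \<in> bump_funs" and sub: "cball x 1 \<subseteq> cbox a b"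
  shows "((\<lambda>y. h y * \<phi> (x - y)) has_integral integral (cbox a b) (\<lambda>y. h y * \<phi> (x - y))) UNIV"
proof (rule has_integral_UNIV_if_vanishes_outside_cbox)
  show "continuous_on UNIV (\<lambda>y. h y * \<phi> (x - y))"
    by (intro continuous_intros h continuous_on_compose2[OF bump_funs_continuous_on[OF \<phi>], of UNIV]) auto
  show "h y * \<phi> (x - y) = 0" if "y \<notin> cbox a b" for y
  proof -
    have "y \<notin> cball x 1" using that sub by blast
    then show ?thesis using bump_funs_eq_0[OF \<phi>, of "x - y"] by (simp add: dist_norm)
  qed
qed

lemma bump_funs_mult_integrable:
  assumes "continuous_on UNIV h" "\<phi> \<in> bump_funs"
  shows "(\<lambda>y. h y * \<phi> y) integrable_on UNIV"
proof -
  obtain a b :: 'a where ab: "cball 0 1 \<subseteq> cbox a b"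
    using bounded_subset_cbox_symmetric[OF bounded_cball] by blast
  show ?thesis
  proof (rule has_integral_integrable[OF has_integral_UNIV_if_vanishes_outside_cbox])
    show "continuous_on UNIV (\<lambda>y. h y * \<phi> y)"
      by (intro continuous_intros assms bump_funs_continuous_on)
    show "h y * \<phi> y = 0" if "y \<notin> cbox a b" for y
    proof -
      have "norm y \<ge> 1" using that ab by (force simp: subset_iff)
      then show ?thesis using bump_funs_eq_0[OF assms(2)] by simp
    qed
  qed
qed

definition convolution :: "('a::euclidean_space \<Rightarrow> real) \<Rightarrow> ('a \<Rightarrow> real) \<Rightarrow> 'a \<Rightarrow> real" where
  "convolution G \<phi> x = integral UNIV (\<lambda>y. G y * \<phi> (x - y))"

lemma convolution_eq_integral_cbox:
  assumes "continuous_on UNIV G" "\<phi> \<in> bump_funs" "cball x 1 \<subseteq> cbox a b"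
  shows "convolution G \<phi> x = integral (cbox a b) (\<lambda>y. G y * \<phi> (x - y))"
  unfolding convolution_def using bump_funs_mult_has_integral[OF assms] by (rule integral_unique)

lemma integral_cbox_shift_has_derivative:
  fixes G \<phi> :: "'a::euclidean_space \<Rightarrow> real"
  assumes G: "continuous_on UNIV G" and D\<phi>_cont: "continuous_on UNIV D\<phi>"
    and D\<phi>: "\<And>z. (\<phi> has_derivative blinfun_apply (D\<phi> z)) (at z)"
  shows "((\<lambda>x. integral (cbox a b) (\<lambda>t. G t * \<phi> (x - t))) has_derivative
    (\<lambda>h. integral (cbox a b) (\<lambda>t. G t * D\<phi> (x0 - t) h))) (at x0)"
proof -
  define fx where "fx x t = G t *\<^sub>R D\<phi> (x - t)" for x t
  have \<phi>_cont: "continuous_on UNIV \<phi>"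
    using D\<phi> has_derivative_continuous continuous_at_imp_continuous_on by blast
  have "((\<lambda>x. G t * \<phi> (x - t)) has_derivative blinfun_apply (fx x t)) (at x within UNIV)" for x t
  proof -
    have "((\<lambda>x. x - t) has_derivative (\<lambda>h. h)) (at x)"
      by (auto intro!: derivative_eq_intros)
    from has_derivative_compose[OF this D\<phi>]
    have "((\<lambda>x. \<phi> (x - t)) has_derivative blinfun_apply (D\<phi> (x - t))) (at x)"
      by (simp add: o_def)
    then show ?thesis
      unfolding fx_def by (auto intro!: derivative_eq_intros simp: blinfun.scaleR_left)
  qed
  moreover have "(\<lambda>t. G t * \<phi> (x - t)) integrable_on cbox a b" for x
    by (intro integrable_continuous continuous_intros continuous_on_subset[OF G]
        continuous_on_compose2[OF \<phi>_cont, of _ "\<lambda>y. x - y"]) auto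
  moreover have "continuous_on (UNIV \<times> cbox a b) (\<lambda>(x, t). fx x t)"
    unfolding fx_def split_beta
    by (intro continuous_intros continuous_on_compose2[OF G, of _ snd]
        continuous_on_compose2[OF D\<phi>_cont, of _ "\<lambda>p. fst p - snd p"]) auto
  ultimately have "((\<lambda>x. integral (cbox a b) (\<lambda>t. G t * \<phi> (x - t))) has_derivative
      integral (cbox a b) (fx x0)) (at x0 within UNIV)"
    by (intro leibniz_rule) auto
  moreover have "fx x0 integrable_on cbox a b"
    unfolding fx_def
    by (intro integrable_continuous continuous_intros continuous_on_subset[OF G]
        continuous_on_compose2[OF D\<phi>_cont, of _ "\<lambda>y. x0 - y"]) auto
  then have "blinfun_apply (integral (cbox a b) (fx x0)) = (\<lambda>h. integral (cbox a b) (\<lambda>t. G t * D\<phi> (x0 - t) h))"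
    by (auto simp: blinfun_apply_integral fx_def blinfun.scaleR_left)
  ultimately show ?thesis
    by simp
qed

lemma convolution_has_derivative:
  assumes G: "continuous_on UNIV G" and \<phi>: "\<phi> \<in> bump_funs"
  shows "(convolution G \<phi> has_derivative (\<lambda>h. convolution G (\<lambda>z. frechet_derivative \<phi> (at z) h) x0)) (at x0)"
proof -
  obtain D\<phi> where D\<phi>_cont: "continuous_on UNIV D\<phi>"
    and D\<phi>: "\<And>z. (\<phi> has_derivative blinfun_apply (D\<phi> z)) (at z)"
    using bump_funs_derivative_blinfun[OF \<phi>] by blast
  have D\<phi>_eq: "blinfun_apply (D\<phi> z) = frechet_derivative \<phi> (at z)" for z
    using frechet_derivative_at[OF D\<phi>] by metis
  obtain a where a: "cball x0 2 \<subseteq> cbox (-a) a"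
    using bounded_subset_cbox_symmetric[OF bounded_cball] by blast
  have sub: "cball x 1 \<subseteq> cbox (-a) a" if "x \<in> ball x0 1" for x
  proof
    fix y assume "y \<in> cball x 1"
    with that have "dist x0 y \<le> 2"
      by (smt (verit) dist_triangle mem_ball mem_cball)
    with a show "y \<in> cbox (-a) a" by auto
  qed
  have "integral (cbox (-a) a) (\<lambda>t. G t * D\<phi> (x0 - t) h)
      = convolution G (\<lambda>z. frechet_derivative \<phi> (at z) h) x0" for h
    unfolding D\<phi>_eq
    by (rule convolution_eq_integral_cbox[symmetric])
      (use G bump_funs_frechet_derivative[OF \<phi>] sub in auto)
  with integral_cbox_shift_has_derivative[OF G D\<phi>_cont D\<phi>, of "-a" a x0]
  have "((\<lambda>x. integral (cbox (-a) a) (\<lambda>t. G t * \<phi> (x - t))) has_derivative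
      (\<lambda>h. convolution G (\<lambda>z. frechet_derivative \<phi> (at z) h) x0)) (at x0)"
    by simp
  then show ?thesis
    by (rule has_derivative_transform_within_open[of _ _ _ _ "ball x0 1"])
      (auto simp: convolution_eq_integral_cbox[OF G \<phi> sub])
qed

lemma smooth_fun_if_closed_under_derivatives:
  assumes closed: "\<And>f. f \<in> S \<Longrightarrow> continuous_on UNIV f \<and> f differentiable_on UNIV
      \<and> (\<forall>v. (\<lambda>x. frechet_derivative f (at x) v) \<in> S)"
    and "f \<in> S"
  shows "smooth_fun f"
proof -
  have "iter_dderiv vs f \<in> S" for vs
    by (induction vs) (use assms in auto)
  then show ?thesis
    unfolding smooth_fun_def using closed by blast
qed

definition scaled_convolutions :: "('a::euclidean_space \<Rightarrow> real) \<Rightarrow> real \<Rightarrow> ('a \<Rightarrow> real) set" where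
  "scaled_convolutions G r = {g. \<exists>c \<phi>. \<phi> \<in> bump_funs \<and> g = (\<lambda>x. c * convolution G \<phi> (x /\<^sub>R r))}"

lemma scaled_convolutions_closed_under_derivatives:
  assumes G: "continuous_on UNIV G" and g: "g \<in> scaled_convolutions G r"
  shows "continuous_on UNIV g \<and> g differentiable_on UNIV
    \<and> (\<forall>v. (\<lambda>x. frechet_derivative g (at x) v) \<in> scaled_convolutions G r)"
proof -
  obtain c \<phi> where \<phi>: "\<phi> \<in> bump_funs" and g_eq: "g = (\<lambda>x. c * convolution G \<phi> (x /\<^sub>R r))"
    using g unfolding scaled_convolutions_def by blast
  define D where "D x h = c * convolution G (\<lambda>z. frechet_derivative \<phi> (at z) (h /\<^sub>R r)) (x /\<^sub>R r)"
    for x h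
  have D: "(g has_derivative D x) (at x)" for x
    unfolding g_eq D_def
    by (auto intro!: derivative_eq_intros has_derivative_compose[of "\<lambda>x. x /\<^sub>R r",
          OF _ convolution_has_derivative[OF G \<phi>], unfolded o_def])
  then have diff: "g differentiable (at x)" for x
    unfolding differentiable_def by blast
  have "(\<lambda>x. frechet_derivative g (at x) v) = (\<lambda>x. D x v)" for v
    using frechet_derivative_at[OF D] by metis
  then have "(\<lambda>x. frechet_derivative g (at x) v) \<in> scaled_convolutions G r" for v
    unfolding scaled_convolutions_def D_def using bump_funs_frechet_derivative[OF \<phi>] by blast
  moreover have "continuous_on UNIV g"
    using diff differentiable_imp_continuous_within continuous_at_imp_continuous_on by blast
  ultimately show ?thesis
    using diff by (auto simp: differentiable_on_def differentiable_at_withinI)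
qed

lemma smooth_fun_scaled_convolution:
  assumes "continuous_on UNIV G" "\<phi> \<in> bump_funs"
  shows "smooth_fun (\<lambda>x. c * convolution G \<phi> (x /\<^sub>R r))"
proof (rule smooth_fun_if_closed_under_derivatives)
  show "(\<lambda>x. c * convolution G \<phi> (x /\<^sub>R r)) \<in> scaled_convolutions G r"
    using assms(2) unfolding scaled_convolutions_def by blast
qed (rule scaled_convolutions_closed_under_derivatives[OF assms(1)])

lemma convolution_eq_integral_reflected:
  assumes G: "continuous_on UNIV G" and \<phi>: "\<phi> \<in> bump_funs"
  shows "convolution G \<phi> x = integral UNIV (\<lambda>z. G (x - z) * \<phi> z)"
proof -
  obtain a b where ab: "cball x 1 \<subseteq> cbox a b"
    using bounded_subset_cbox_symmetric[OF bounded_cball] by blast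
  have "integral UNIV (\<lambda>z. G (x - z) * \<phi> (x - (x - z))) = integral UNIV (\<lambda>y. G y * \<phi> (x - y))"
  proof (rule integral_UNIV_reflect_shift)
    show "continuous_on UNIV (\<lambda>y. G y * \<phi> (x - y))"
      by (intro continuous_intros G continuous_on_compose2[OF bump_funs_continuous_on[OF \<phi>], of UNIV])
        auto
    show "G y * \<phi> (x - y) = 0" if "y \<notin> cbox a b" for y
    proof -
      have "y \<notin> cball x 1" using that ab by blast
      then show ?thesis using bump_funs_eq_0[OF \<phi>, of "x - y"] by (simp add: dist_norm)
    qed
  qed
  then show ?thesis
    by (simp add: convolution_def)
qed

section \<open>Mollification\<close>

definition prob_bump :: "('a::euclidean_space \<Rightarrow> real) \<Rightarrow> bool" where
  "prob_bump \<rho> \<longleftrightarrow> \<rho> \<in> bump_funs \<and> (\<forall>x. 0 \<le> \<rho> x) \<and> integral UNIV \<rho> = 1"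

lemma integral_bump_profile_pos: "integral UNIV (\<lambda>x::'a::euclidean_space. bump_profile 0 (x \<bullet> x)) > 0"
proof -
  define \<rho>0 where "\<rho>0 = (\<lambda>x::'a. bump_profile 0 (x \<bullet> x))"
  have \<rho>0: "\<rho>0 \<in> bump_funs"
    unfolding \<rho>0_def by (rule bump_funs.profile)
  have nonneg: "\<rho>0 x \<ge> 0" for x
    unfolding \<rho>0_def by (rule bump_profile_0_nonneg)
  obtain a :: 'a where a: "cball 0 1 \<subseteq> cbox (-a) a"
    using bounded_subset_cbox_symmetric[OF bounded_cball] by blast
  have cont: "continuous_on (cbox (-a) a) \<rho>0"
    by (rule bump_funs_continuous_on[OF \<rho>0])
  have "(\<rho>0 has_integral integral (cbox (-a) a) \<rho>0) UNIV"
  proof (rule has_integral_UNIV_if_vanishes_outside_cbox)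
    show "\<rho>0 y = 0" if "y \<notin> cbox (-a) a" for y
      using that a bump_funs_eq_0[OF \<rho>0, of y] by (force simp: subset_iff)
  qed (rule bump_funs_continuous_on[OF \<rho>0])
  then have int_eq: "integral UNIV \<rho>0 = integral (cbox (-a) a) \<rho>0"
    by (rule integral_unique)
  have "integral (cbox (-a) a) \<rho>0 \<noteq> 0"
  proof
    assume "integral (cbox (-a) a) \<rho>0 = 0"
    then have "(\<rho>0 has_integral 0) (cbox (-a) a)"
      using integrable_continuous[OF cont] by (metis has_integral_integral)
    moreover have "box (-a) a \<noteq> {}"
      using a ball_subset_cball interior_cball interior_mono[OF a] interior_cbox by fastforce
    moreover have "0 \<in> cbox (-a) a"
      using a by auto
    ultimately have "\<rho>0 0 = 0"
      using has_integral_0_cbox_imp_0[OF cont] nonneg by blast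
    then show False
      using bump_profile_0_pos[of 0] by (simp add: \<rho>0_def)
  qed
  moreover have "integral (cbox (-a) a) \<rho>0 \<ge> 0"
    using integrable_continuous[OF cont] nonneg by (rule integral_nonneg)
  ultimately show ?thesis
    using int_eq by (simp add: \<rho>0_def)
qed

lemma prob_bump_exists: "\<exists>\<rho>::'a::euclidean_space \<Rightarrow> real. prob_bump \<rho>"
proof -
  define c where "c = integral UNIV (\<lambda>x::'a. bump_profile 0 (x \<bullet> x))"
  have "prob_bump (\<lambda>x::'a. (1 / c) * bump_profile 0 (x \<bullet> x))"
    unfolding prob_bump_def
  proof (intro conjI allI)
    show "(\<lambda>x::'a. (1 / c) * bump_profile 0 (x \<bullet> x)) \<in> bump_funs"
      by (intro bump_funs.scale bump_funs.profile)
  qed (use integral_bump_profile_pos[where 'a='a] bump_profile_0_nonneg in \<open>auto simp: c_def\<close>)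
  then show ?thesis by blast
qed

lemma prob_bump_integral_mono:
  assumes \<rho>: "prob_bump \<rho>" and h: "continuous_on UNIV h" and g: "continuous_on UNIV g"
    and le: "\<And>w. norm w < 1 \<Longrightarrow> h w \<le> g w"
  shows "integral UNIV (\<lambda>w. h w * \<rho> w) \<le> integral UNIV (\<lambda>w. g w * \<rho> w)"
proof (rule integral_le)
  have \<rho>_bump: "\<rho> \<in> bump_funs" and nonneg: "\<And>w. 0 \<le> \<rho> w"
    using \<rho> unfolding prob_bump_def by auto
  show "(\<lambda>w. h w * \<rho> w) integrable_on UNIV" "(\<lambda>w. g w * \<rho> w) integrable_on UNIV"
    using bump_funs_mult_integrable[OF h \<rho>_bump] bump_funs_mult_integrable[OF g \<rho>_bump] .
  show "h w * \<rho> w \<le> g w * \<rho> w" for w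
    using le[of w] nonneg[of w] bump_funs_eq_0[OF \<rho>_bump, of w]
    by (cases "norm w < 1") (auto intro: mult_right_mono)
qed

lemma prob_bump_integral_le:
  assumes "prob_bump \<rho>" "continuous_on UNIV h" "\<And>w. norm w < 1 \<Longrightarrow> h w \<le> C"
  shows "integral UNIV (\<lambda>w. h w * \<rho> w) \<le> C"
  using prob_bump_integral_mono[OF assms(1,2) continuous_on_const assms(3)] assms(1)
  by (simp add: prob_bump_def)

lemma prob_bump_integral_ge:
  assumes "prob_bump \<rho>" "continuous_on UNIV h" "\<And>w. norm w < 1 \<Longrightarrow> C \<le> h w"
  shows "C \<le> integral UNIV (\<lambda>w. h w * \<rho> w)"
  using prob_bump_integral_mono[OF assms(1) continuous_on_const assms(2,3)] assms(1)
  by (simp add: prob_bump_def)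

lemma prob_bump_integral_abs_le:
  assumes \<rho>: "prob_bump \<rho>" and h: "continuous_on UNIV h"
    and le: "\<And>w. norm w < 1 \<Longrightarrow> \<bar>h w\<bar> \<le> C"
  shows "\<bar>integral UNIV (\<lambda>w. h w * \<rho> w)\<bar> \<le> C"
  using prob_bump_integral_le[OF \<rho> h, of C] prob_bump_integral_ge[OF \<rho> h, of "-C"] le
  by (force simp: abs_le_iff)

definition mollify :: "('a::euclidean_space \<Rightarrow> real) \<Rightarrow> real \<Rightarrow> ('a \<Rightarrow> real) \<Rightarrow> 'a \<Rightarrow> real" where
  "mollify \<rho> r G x = integral UNIV (\<lambda>w. G (x - r *\<^sub>R w) * \<rho> w)"

lemma continuous_on_shifted:
  fixes G :: "'a::real_normed_vector \<Rightarrow> 'b::topological_space"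
  shows "continuous_on UNIV G \<Longrightarrow> continuous_on UNIV (\<lambda>w. G (x - r *\<^sub>R w))"
  by (rule continuous_on_compose2[of UNIV G]) (auto intro!: continuous_intros)

lemma mollify_diff:
  assumes "prob_bump \<rho>" "continuous_on UNIV G"
  shows "mollify \<rho> r G x - mollify \<rho> s G y
    = integral UNIV (\<lambda>w. (G (x - r *\<^sub>R w) - G (y - s *\<^sub>R w)) * \<rho> w)"
  using assms unfolding mollify_def prob_bump_def
  by (simp add: left_diff_distrib integral_diff bump_funs_mult_integrable continuous_on_shifted)

lemma mollify_radius_0: "prob_bump \<rho> \<Longrightarrow> mollify \<rho> 0 G x = G x"
  by (simp add: mollify_def prob_bump_def)

lemma mollify_diff_bounds:
  assumes \<rho>: "prob_bump \<rho>" and G: "continuous_on UNIV G"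
    and bounds: "\<And>x y. lo (x - y) \<le> G x - G y \<and> G x - G y \<le> hi (x - y)"
  shows "lo (x - y) \<le> mollify \<rho> r G x - mollify \<rho> r G y
    \<and> mollify \<rho> r G x - mollify \<rho> r G y \<le> hi (x - y)"
proof -
  have "lo (x - y) \<le> G (x - r *\<^sub>R w) - G (y - r *\<^sub>R w) \<and> G (x - r *\<^sub>R w) - G (y - r *\<^sub>R w) \<le> hi (x - y)"
    for w
    using bounds[of "x - r *\<^sub>R w" "y - r *\<^sub>R w"] by simp
  then show ?thesis
    unfolding mollify_diff[OF \<rho> G]
    by (intro conjI prob_bump_integral_le[OF \<rho>] prob_bump_integral_ge[OF \<rho>]
        continuous_on_diff continuous_on_shifted G) auto
qed

lemma mollify_lipschitz:
  assumes \<rho>: "prob_bump \<rho>" and G: "continuous_on UNIV G"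
    and lip: "\<And>x y. \<bar>G x - G y\<bar> \<le> L * norm (x - y)"
  shows "\<bar>mollify \<rho> r G x - mollify \<rho> r G y\<bar> \<le> L * norm (x - y)"
proof -
  have "- (L * norm (x - y)) \<le> G x - G y \<and> G x - G y \<le> L * norm (x - y)" for x y
    using lip[of x y] by (simp add: abs_le_iff)
  from mollify_diff_bounds[OF \<rho> G this, of x y r] show ?thesis
    by (simp add: abs_le_iff)
qed

lemma mollify_radius_lipschitz:
  assumes \<rho>: "prob_bump \<rho>" and G: "continuous_on UNIV G"
    and lip: "\<And>x y. \<bar>G x - G y\<bar> \<le> L * norm (x - y)" and "L \<ge> 0"
  shows "\<bar>mollify \<rho> r G x - mollify \<rho> s G x\<bar> \<le> L * \<bar>r - s\<bar>"
proof -
  have "\<bar>G (x - r *\<^sub>R w) - G (x - s *\<^sub>R w)\<bar> \<le> L * \<bar>r - s\<bar>" if "norm w < 1" for w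
  proof -
    have "\<bar>G (x - r *\<^sub>R w) - G (x - s *\<^sub>R w)\<bar> \<le> L * (\<bar>r - s\<bar> * norm w)"
      using lip[of "x - r *\<^sub>R w" "x - s *\<^sub>R w"] by (simp add: algebra_simps abs_minus_commute flip: scaleR_diff_left)
    also have "\<dots> \<le> L * \<bar>r - s\<bar>"
      using that \<open>L \<ge> 0\<close> by (simp add: mult_left_le mult_left_mono)
    finally show ?thesis .
  qed
  then show ?thesis
    unfolding mollify_diff[OF \<rho> G]
    by (intro prob_bump_integral_abs_le[OF \<rho>] continuous_on_diff continuous_on_shifted G)
qed

lemma mollify_approx:
  assumes "prob_bump \<rho>" "continuous_on UNIV G"
    and "\<And>x y. \<bar>G x - G y\<bar> \<le> L * norm (x - y)" "L \<ge> 0" "r \<ge> 0"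
  shows "\<bar>mollify \<rho> r G x - G x\<bar> \<le> L * r"
  using mollify_radius_lipschitz[OF assms(1-4), of r x 0] assms(5)
  by (simp add: mollify_radius_0[OF assms(1)])

lemma mollify_homogeneous:
  assumes hom: "\<And>t x. t \<ge> 0 \<Longrightarrow> G (t *\<^sub>R x) = t * G x" and "t \<ge> 0"
  shows "t * mollify \<rho> r G x = mollify \<rho> (t * r) G (t *\<^sub>R x)"
proof -
  have "t * (G (x - r *\<^sub>R w) * \<rho> w) = G (t *\<^sub>R x - (t * r) *\<^sub>R w) * \<rho> w" for w
    using hom[OF \<open>t \<ge> 0\<close>, of "x - r *\<^sub>R w"] by (simp add: algebra_simps)
  then have "integral UNIV (\<lambda>w. t * (G (x - r *\<^sub>R w) * \<rho> w)) = mollify \<rho> (t * r) G (t *\<^sub>R x)"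
    by (simp only: mollify_def)
  then show ?thesis
    by (simp add: mollify_def)
qed

lemma mollify_homogeneity_defect:
  assumes \<rho>: "prob_bump \<rho>" and G: "continuous_on UNIV G"
    and lip: "\<And>x y. \<bar>G x - G y\<bar> \<le> L * norm (x - y)" "L \<ge> 0"
    and hom: "\<And>t x. t \<ge> 0 \<Longrightarrow> G (t *\<^sub>R x) = t * G x" and "r \<ge> 0" "t > 0"
  shows "\<bar>mollify \<rho> r G (t *\<^sub>R x) - t * mollify \<rho> r G x\<bar> \<le> L * r * \<bar>t - 1\<bar>"
proof -
  have "\<bar>r - t * r\<bar> = r * \<bar>t - 1\<bar>"
    using \<open>r \<ge> 0\<close> by (simp add: abs_mult_pos' algebra_simps flip: abs_minus_commute)
  then show ?thesis
    using mollify_radius_lipschitz[OF \<rho> G lip, of r "t *\<^sub>R x" "t * r"] \<open>t > 0\<close>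
    by (simp add: mollify_homogeneous[OF hom] mult.assoc)
qed

lemma mollify_concave:
  assumes \<rho>: "prob_bump \<rho>" and G: "continuous_on UNIV G" and conc: "concave_on UNIV G"
  shows "concave_on UNIV (mollify \<rho> r G)"
  unfolding concave_on_iff
proof (intro conjI ballI allI impI convex_UNIV)
  fix x y :: 'a and u v :: real
  assume uv: "0 \<le> u" "0 \<le> v" "u + v = 1"
  let ?g = "\<lambda>w. G (u *\<^sub>R x + v *\<^sub>R y - r *\<^sub>R w) - u * G (x - r *\<^sub>R w) - v * G (y - r *\<^sub>R w)"
  have int: "(\<lambda>w. h w * \<rho> w) integrable_on UNIV" if "continuous_on UNIV h" for h
    using bump_funs_mult_integrable[OF that] \<rho> unfolding prob_bump_def by blast
  have int_shift: "(\<lambda>w. G (z - r *\<^sub>R w) * \<rho> w) integrable_on UNIV" for z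
    by (intro int continuous_on_shifted G)
  have "integral UNIV (\<lambda>w. ?g w * \<rho> w) = integral UNIV (\<lambda>w. G (u *\<^sub>R x + v *\<^sub>R y - r *\<^sub>R w) * \<rho> w
      - u * (G (x - r *\<^sub>R w) * \<rho> w) - v * (G (y - r *\<^sub>R w) * \<rho> w))"
    by (simp add: algebra_simps)
  also have "\<dots> = mollify \<rho> r G (u *\<^sub>R x + v *\<^sub>R y) - u * mollify \<rho> r G x - v * mollify \<rho> r G y"
    unfolding mollify_def using int_shift
    by (simp add: integral_diff integrable_diff integrable_on_mult_right)
  finally have "mollify \<rho> r G (u *\<^sub>R x + v *\<^sub>R y) - u * mollify \<rho> r G x - v * mollify \<rho> r G y
      = integral UNIV (\<lambda>w. ?g w * \<rho> w)" ..
  moreover have "0 \<le> ?g w" for w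
  proof -
    have "u *\<^sub>R (x - r *\<^sub>R w) + v *\<^sub>R (y - r *\<^sub>R w) = u *\<^sub>R x + v *\<^sub>R y - (u + v) *\<^sub>R (r *\<^sub>R w)"
      by (simp add: algebra_simps)
    with uv have "u *\<^sub>R x + v *\<^sub>R y - r *\<^sub>R w = u *\<^sub>R (x - r *\<^sub>R w) + v *\<^sub>R (y - r *\<^sub>R w)"
      by simp
    moreover have "u * G (x - r *\<^sub>R w) + v * G (y - r *\<^sub>R w)
        \<le> G (u *\<^sub>R (x - r *\<^sub>R w) + v *\<^sub>R (y - r *\<^sub>R w))"
      using conc uv unfolding concave_on_iff by blast
    ultimately show ?thesis by simp
  qed
  moreover have "continuous_on UNIV ?g"
    by (intro continuous_intros continuous_on_shifted G)
  ultimately show "u * mollify \<rho> r G x + v * mollify \<rho> r G y \<le> mollify \<rho> r G (u *\<^sub>R x + v *\<^sub>R y)"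
    using prob_bump_integral_ge[OF \<rho>, of ?g 0] by simp
qed

lemma mollify_eq_scaled_convolution:
  assumes \<rho>: "prob_bump \<rho>" and G: "continuous_on UNIV G"
    and hom: "\<And>t x. t \<ge> 0 \<Longrightarrow> G (t *\<^sub>R x) = t * G x" and "r > 0"
  shows "mollify \<rho> r G x = r * convolution G \<rho> (x /\<^sub>R r)"
proof -
  have "mollify \<rho> 1 G y = convolution G \<rho> y" for y
    using convolution_eq_integral_reflected[OF G] \<rho> by (simp add: mollify_def prob_bump_def)
  then show ?thesis
    using mollify_homogeneous[OF hom, of r \<rho> 1 "x /\<^sub>R r"] \<open>r > 0\<close> by simp
qed

lemma smooth_fun_mollify:
  assumes "prob_bump \<rho>" "continuous_on UNIV G"
    and "\<And>t x. t \<ge> 0 \<Longrightarrow> G (t *\<^sub>R x) = t * G x" "r > 0"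
  shows "smooth_fun (mollify \<rho> r G)"
proof -
  have "mollify \<rho> r G = (\<lambda>x. r * convolution G \<rho> (x /\<^sub>R r))"
    using mollify_eq_scaled_convolution[OF assms] by blast
  then show ?thesis
    using smooth_fun_scaled_convolution[OF assms(2)] assms(1) by (simp add: prob_bump_def)
qed

lemma mollify_idempotent_invariant:
  assumes "linear P" "\<And>x. P (P x) = P x" "\<And>x. G (P x) = G x"
  shows "mollify \<rho> r G (P x) = mollify \<rho> r G x"
proof -
  have "G (P x - r *\<^sub>R w) = G (x - r *\<^sub>R w)" for w
    by (metis assms linear_diff)
  then show ?thesis
    by (simp add: mollify_def)
qed

lemma smooth_fun_differentiable: "smooth_fun f \<Longrightarrow> f differentiable (at x)"
  unfolding smooth_fun_def using iter_dderiv.simps(1) by (metis differentiable_on_def UNIV_I)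

lemma euler_defect_le:
  fixes f :: "'a::real_normed_vector \<Rightarrow> real"
  assumes diff: "f differentiable (at x)"
    and defect: "\<And>t. t > 0 \<Longrightarrow> \<bar>f (t *\<^sub>R x) - t * f x\<bar> \<le> K * \<bar>t - 1\<bar>"
  shows "\<bar>frechet_derivative f (at x) x - f x\<bar> \<le> K"
proof -
  define D where "D = frechet_derivative f (at x)"
  have "(f has_derivative D) (at x)"
    unfolding D_def using diff frechet_derivative_works by blast
  then have "((\<lambda>t. f (t *\<^sub>R x) - t * f x) has_derivative (\<lambda>h. D (h *\<^sub>R x) - h * f x)) (at 1)"
    by (auto intro!: derivative_eq_intros has_derivative_compose[of "\<lambda>t. t *\<^sub>R x", unfolded o_def])
  moreover have "linear D"
    unfolding D_def using diff by (rule linear_frechet_derivative)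
  then have "(\<lambda>h. D (h *\<^sub>R x) - h * f x) = (*) (D x - f x)"
    by (auto simp: linear_scale algebra_simps)
  ultimately have "((\<lambda>t. f (t *\<^sub>R x) - t * f x) has_real_derivative D x - f x) (at 1)"
    by (simp add: has_field_derivative_def)
  then have "((\<lambda>t. \<bar>(f (t *\<^sub>R x) - t * f x) / (t - 1)\<bar>) \<longlongrightarrow> \<bar>D x - f x\<bar>) (at 1)"
    unfolding has_field_derivative_iff by (auto dest: tendsto_rabs)
  moreover have "\<forall>\<^sub>F t in at 1. \<bar>(f (t *\<^sub>R x) - t * f x) / (t - 1)\<bar> \<le> K"
  proof -
    have "\<forall>\<^sub>F t in at (1::real). t \<in> {0<..} \<and> t \<noteq> 1"
      by (intro eventually_conj eventually_at_in_open') (auto simp: eventually_at_filter)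
    then show ?thesis
      by eventually_elim (use defect in \<open>auto simp: abs_divide divide_le_eq\<close>)
  qed
  ultimately show ?thesis
    unfolding D_def by (rule tendsto_upperbound) simp
qed

section \<open>Pucci bounds and symmetrization\<close>

lemma quadratic_form_axis:
  fixes A :: "real^'n^'n"
  shows "axis i 1 \<bullet> (A *v axis i 1) = A $ i $ i"
  by (simp add: inner_axis' matrix_vector_mult_basis column_def)

lemma quadratic_form_axis_pair:
  fixes A :: "real^'n^'n"
  shows "(axis i 1 + s *\<^sub>R axis j 1) \<bullet> (A *v (axis i 1 + s *\<^sub>R axis j 1))
    = A $ i $ i + s * A $ i $ j + s * A $ j $ i + s * s * A $ j $ j"
  by (simp add: matrix_vector_right_distrib inner_add_left inner_add_right inner_axis'
      matrix_vector_mult_basis column_def algebra_simps matrix_vector_mult_scaleR)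

lemma ellip_class_symmetric: "A \<in> ellip_class lam Lam \<Longrightarrow> A $ j $ i = A $ i $ j"
  unfolding ellip_class_def by (metis (mono_tags, lifting) mem_Collect_eq transpose_def vec_lambda_beta)

lemma ellip_class_entry_bound:
  fixes A :: "real^'n^'n"
  assumes A: "A \<in> ellip_class lam Lam" and lam: "0 < lam"
  shows "\<bar>A $ i $ j\<bar> \<le> Lam"
proof -
  have quad: "lam * (\<xi> \<bullet> \<xi>) \<le> \<xi> \<bullet> (A *v \<xi>) \<and> \<xi> \<bullet> (A *v \<xi>) \<le> Lam * (\<xi> \<bullet> \<xi>)" for \<xi>
    using A unfolding ellip_class_def by blast
  have diag: "lam \<le> A $ k $ k \<and> A $ k $ k \<le> Lam" for k
    using quad[of "axis k 1"] by (simp add: quadratic_form_axis inner_axis_axis)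
  show ?thesis
  proof (cases "i = j")
    case True
    then show ?thesis using diag[of i] lam by auto
  next
    case False
    have norm_sq: "(axis i 1 + s *\<^sub>R axis j 1) \<bullet> (axis i 1 + s *\<^sub>R axis j 1 :: real^'n) = 1 + s * s"
      for s :: real
      using False by (simp add: inner_add_left inner_add_right inner_axis_axis)
    have "A $ i $ i + 2 * A $ i $ j + A $ j $ j \<le> 2 * Lam"
      using quad[of "axis i 1 + 1 *\<^sub>R axis j 1"] quadratic_form_axis_pair[of i 1 j A] norm_sq[of 1]
        ellip_class_symmetric[OF A] by simp
    moreover have "A $ i $ i - 2 * A $ i $ j + A $ j $ j \<le> 2 * Lam"
      using quad[of "axis i 1 + (-1) *\<^sub>R axis j 1"] quadratic_form_axis_pair[of i "-1" j A]
        norm_sq[of "-1"] ellip_class_symmetric[OF A] by simp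
    ultimately show ?thesis
      using diag[of i] diag[of j] lam by linarith
  qed
qed

lemma abs_trace_mult_le:
  fixes A X :: "real^'n^'n"
  assumes A: "A \<in> ellip_class lam Lam" and lam: "0 < lam" and X: "\<And>i j. \<bar>X $ i $ j\<bar> \<le> B"
  shows "\<bar>trace (A ** X)\<bar> \<le> Lam * real CARD('n)^2 * B"
proof -
  have "\<bar>trace (A ** X)\<bar> = \<bar>\<Sum>i\<in>UNIV. \<Sum>k\<in>UNIV. A $ i $ k * X $ k $ i\<bar>"
    by (simp add: trace_def matrix_matrix_mult_def)
  also have "\<dots> \<le> (\<Sum>i\<in>(UNIV::'n set). \<Sum>k\<in>(UNIV::'n set). \<bar>A $ i $ k * X $ k $ i\<bar>)"
    by (rule order_trans[OF sum_abs sum_mono[OF sum_abs]])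
  also have "\<dots> \<le> (\<Sum>i\<in>(UNIV::'n set). \<Sum>k\<in>(UNIV::'n set). Lam * B)"
  proof (intro sum_mono)
    fix i k
    show "\<bar>A $ i $ k * X $ k $ i\<bar> \<le> Lam * B"
      unfolding abs_mult using ellip_class_entry_bound[OF A lam] X
      by (intro mult_mono) (auto intro: order_trans[OF abs_ge_zero])
  qed
  also have "\<dots> = Lam * real CARD('n)^2 * B"
    by (simp add: power2_eq_square)
  finally show ?thesis .
qed

lemma scaled_identity_in_ellip_class:
  assumes "0 < lam" "lam \<le> Lam"
  shows "(lam *\<^sub>R mat 1 :: real^'n^'n) \<in> ellip_class lam Lam"
proof -
  have "transpose (lam *\<^sub>R mat 1 :: real^'n^'n) = lam *\<^sub>R mat 1"
    by (simp add: vec_eq_iff transpose_def mat_def)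
  moreover have "(lam *\<^sub>R mat 1 :: real^'n^'n) *v \<xi> = lam *\<^sub>R \<xi>" for \<xi>
    by (metis matrix_vector_mul_lid scaleR_matrix_vector_assoc)
  moreover have "lam * (\<xi> \<bullet> \<xi>) \<le> Lam * (\<xi> \<bullet> \<xi>)" for \<xi> :: "real^'n"
    using assms by (simp add: mult_right_mono)
  ultimately show ?thesis
    unfolding ellip_class_def by auto
qed

lemma pucci_bounds:
  fixes X :: "real^'n^'n"
  assumes lam: "0 < lam" "lam \<le> Lam" and X: "\<And>i j. \<bar>X $ i $ j\<bar> \<le> B"
  shows "- (Lam * real CARD('n)^2 * B) \<le> pucci_minus lam Lam X"
    and "pucci_plus lam Lam X \<le> Lam * real CARD('n)^2 * B"
proof -
  let ?C = "Lam * real CARD('n)^2 * B"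
  have ne: "ellip_class lam Lam \<noteq> ({} :: (real^'n^'n) set)"
    using scaled_identity_in_ellip_class[OF lam] by blast
  have bound: "- ?C \<le> trace (A ** X) \<and> trace (A ** X) \<le> ?C" if "A \<in> ellip_class lam Lam" for A
    using abs_trace_mult_le[OF that lam(1) X] by linarith
  show "- ?C \<le> pucci_minus lam Lam X"
    unfolding pucci_minus_def using bound ne by (intro cINF_greatest) auto
  show "pucci_plus lam Lam X \<le> ?C"
    unfolding pucci_plus_def using bound ne by (intro cSUP_least) auto
qed

lemma symmetrize_nth: "symmetrize X $ i $ j = (X $ i $ j + X $ j $ i) / 2"
  by (simp add: symmetrize_def transpose_def)

lemma symmetrize_in_sym_mats: "symmetrize X \<in> sym_mats"
  by (simp add: sym_mats_def vec_eq_iff transpose_def symmetrize_nth)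

lemma symmetrize_sym_mats: "M \<in> sym_mats \<Longrightarrow> symmetrize M = M"
  unfolding sym_mats_def by (simp add: symmetrize_def)

lemma linear_symmetrize: "linear symmetrize"
  by (rule linearI) (simp_all add: vec_eq_iff symmetrize_nth add_divide_distrib algebra_simps)

lemma abs_symmetrize_nth_le_norm: "\<bar>symmetrize X $ i $ j\<bar> \<le> norm X"
proof -
  have entry: "\<bar>X $ k $ l\<bar> \<le> norm X" for k l
    using component_le_norm_cart[of "X $ k" l] Finite_Cartesian_Product.norm_nth_le[of X k] by linarith
  show ?thesis
    using entry[of i j] entry[of j i] by (simp add: symmetrize_nth)
qed

lemma convex_sym_mats: "convex sym_mats"
  unfolding convex_def sym_mats_def by (simp add: transpose_def vec_eq_iff)

lemma F1_symmetrize: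
  assumes "F1 lam Lam F"
  shows "pucci_minus lam Lam (symmetrize (X - Y)) \<le> F (symmetrize X) - F (symmetrize Y)
    \<and> F (symmetrize X) - F (symmetrize Y) \<le> pucci_plus lam Lam (symmetrize (X - Y))"
  using assms symmetrize_in_sym_mats unfolding F1_def linear_diff[OF linear_symmetrize] by blast

lemma F1_symmetrize_lipschitz:
  fixes F :: "real^'n^'n \<Rightarrow> real"
  assumes lam: "0 < lam" "lam \<le> Lam" and F: "F1 lam Lam F"
  shows "\<bar>F (symmetrize X) - F (symmetrize Y)\<bar> \<le> Lam * real CARD('n)^2 * norm (X - Y)"
  using F1_symmetrize[OF F, of X Y] pucci_bounds[OF lam abs_symmetrize_nth_le_norm, of "X - Y"]
  by linarith

lemma F2_symmetrize:
  assumes "F2 F" "t \<ge> 0"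
  shows "F (symmetrize (t *\<^sub>R X)) = t * F (symmetrize X)"
  using assms symmetrize_in_sym_mats unfolding F2_def linear_scale[OF linear_symmetrize] by blast

lemma F3_symmetrize:
  fixes F :: "real^'n^'n \<Rightarrow> real"
  assumes "F3 F"
  shows "concave_on UNIV (\<lambda>X. F (symmetrize X))"
  unfolding concave_on_iff
proof (intro conjI ballI allI impI convex_UNIV)
  fix X Y :: "real^'n^'n" and u v :: real
  assume "0 \<le> u" "0 \<le> v" "u + v = 1"
  then show "u * F (symmetrize X) + v * F (symmetrize Y) \<le> F (symmetrize (u *\<^sub>R X + v *\<^sub>R Y))"
    using assms symmetrize_in_sym_mats
    unfolding F3_def concave_on_iff linear_add[OF linear_symmetrize] linear_scale[OF linear_symmetrize]
    by blast
qed

section \<open>Mollified operators\<close>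

lemma uniformly_close_if_linear_bound:
  fixes f :: "real \<Rightarrow> 'a \<Rightarrow> real" and C :: real
  assumes bound: "\<And>e x. e > 0 \<Longrightarrow> x \<in> S \<Longrightarrow> \<bar>f e x - g x\<bar> \<le> C * e" and "C > 0"
  shows "\<forall>\<delta>>0. \<exists>e0>0. \<forall>e. 0 < e \<and> e < e0 \<longrightarrow> (\<forall>x\<in>S. \<bar>f e x - g x\<bar> \<le> \<delta>)"
proof (intro allI impI)
  fix \<delta> :: real
  assume "\<delta> > 0"
  have "\<bar>f e x - g x\<bar> \<le> \<delta>" if "0 < e" "e < \<delta> / C" "x \<in> S" for e x
  proof -
    have "C * e \<le> \<delta>"
      using that(2) \<open>C > 0\<close> by (simp add: field_simps)
    with bound[OF that(1,3)] show ?thesis by linarith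
  qed
  with \<open>\<delta> > 0\<close> \<open>C > 0\<close> show "\<exists>e0>0. \<forall>e. 0 < e \<and> e < e0 \<longrightarrow> (\<forall>x\<in>S. \<bar>f e x - g x\<bar> \<le> \<delta>)"
    by (intro exI[of _ "\<delta> / C"]) auto
qed

definition sym_mollify :: "(real^'n^'n \<Rightarrow> real) \<Rightarrow> real \<Rightarrow> (real^'n^'n \<Rightarrow> real) \<Rightarrow> real^'n^'n \<Rightarrow> real"
  where "sym_mollify \<rho> r F = mollify \<rho> r (\<lambda>X. F (symmetrize X))"

lemma continuous_on_F_symmetrize:
  fixes F :: "real^'n^'n \<Rightarrow> real"
  assumes "0 < lam" "lam \<le> Lam" "F1 lam Lam F"
  shows "continuous_on UNIV (\<lambda>X. F (symmetrize X))"
proof (rule lipschitz_on_continuous_on)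
  show "(Lam * real CARD('n)^2)-lipschitz_on UNIV (\<lambda>X. F (symmetrize X))"
    using F1_symmetrize_lipschitz[OF assms] assms(1,2)
    by (intro lipschitz_onI) (auto simp: dist_norm dist_real_def)
qed

lemma sym_mollify_symmetrize: "sym_mollify \<rho> r F (symmetrize M) = sym_mollify \<rho> r F M"
  unfolding sym_mollify_def
  by (rule mollify_idempotent_invariant[OF linear_symmetrize])
    (simp_all add: symmetrize_sym_mats symmetrize_in_sym_mats)

lemma smooth_fun_sym_mollify:
  assumes "0 < lam" "lam \<le> Lam" "F1 lam Lam F" "F2 F" "prob_bump \<rho>" "r > 0"
  shows "smooth_fun (sym_mollify \<rho> r F)"
  unfolding sym_mollify_def
  using smooth_fun_mollify[OF assms(5) continuous_on_F_symmetrize[OF assms(1-3)]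
      F2_symmetrize[OF assms(4)] assms(6)] .

lemma smooth_on_sym_sym_mollify:
  assumes "0 < lam" "lam \<le> Lam" "F1 lam Lam F" "F2 F" "prob_bump \<rho>" "r > 0"
  shows "smooth_on_sym (sym_mollify \<rho> r F)"
  unfolding smooth_on_sym_def sym_mollify_symmetrize using smooth_fun_sym_mollify[OF assms] .

lemma F1_sym_mollify:
  fixes F :: "real^'n^'n \<Rightarrow> real"
  assumes "0 < lam" "lam \<le> Lam" "F1 lam Lam F" "prob_bump \<rho>"
  shows "F1 lam Lam (sym_mollify \<rho> r F)"
  unfolding F1_def
proof (intro ballI)
  fix M N :: "real^'n^'n"
  assume "M \<in> sym_mats" "N \<in> sym_mats"
  then have "symmetrize (M - N) = M - N"
    by (simp add: symmetrize_sym_mats linear_diff[OF linear_symmetrize])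
  with mollify_diff_bounds[OF assms(4) continuous_on_F_symmetrize[OF assms(1-3)]
      F1_symmetrize[OF assms(3)]]
  show "pucci_minus lam Lam (M - N) \<le> sym_mollify \<rho> r F M - sym_mollify \<rho> r F N
      \<and> sym_mollify \<rho> r F M - sym_mollify \<rho> r F N \<le> pucci_plus lam Lam (M - N)"
    unfolding sym_mollify_def by metis
qed

lemma F3_sym_mollify:
  assumes "0 < lam" "lam \<le> Lam" "F1 lam Lam F" "F3 F" "prob_bump \<rho>"
  shows "F3 (sym_mollify \<rho> r F)"
  using mollify_concave[OF assms(5) continuous_on_F_symmetrize[OF assms(1-3)] F3_symmetrize[OF assms(4)]]
  unfolding F3_def concave_on_def sym_mollify_def
  by (rule convex_on_subset) (simp_all add: convex_sym_mats)

lemma sym_mollify_approx: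
  fixes F :: "real^'n^'n \<Rightarrow> real"
  assumes "0 < lam" "lam \<le> Lam" "F1 lam Lam F" "prob_bump \<rho>" "r \<ge> 0" "M \<in> sym_mats"
  shows "\<bar>sym_mollify \<rho> r F M - F M\<bar> \<le> Lam * real CARD('n)^2 * r"
  using mollify_approx[OF assms(4) continuous_on_F_symmetrize[OF assms(1-3)]
      F1_symmetrize_lipschitz[OF assms(1-3)] _ assms(5), of M] assms(1,2,6)
  by (simp add: sym_mollify_def symmetrize_sym_mats)

lemma lipschitz_on_sym_mollify:
  fixes F :: "real^'n^'n \<Rightarrow> real"
  assumes "0 < lam" "lam \<le> Lam" "F1 lam Lam F" "prob_bump \<rho>"
  shows "(Lam * real CARD('n)^2)-lipschitz_on sym_mats (sym_mollify \<rho> r F)"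
  using mollify_lipschitz[OF assms(4) continuous_on_F_symmetrize[OF assms(1-3)]
      F1_symmetrize_lipschitz[OF assms(1-3)]] assms(1,2)
  by (intro lipschitz_onI) (auto simp: sym_mollify_def dist_norm dist_real_def)

lemma sym_mollify_euler_defect:
  fixes F :: "real^'n^'n \<Rightarrow> real"
  assumes "0 < lam" "lam \<le> Lam" "F1 lam Lam F" "F2 F" "prob_bump \<rho>" "r > 0"
  shows "\<bar>frechet_derivative (\<lambda>M. sym_mollify \<rho> r F (symmetrize M)) (at z) z - sym_mollify \<rho> r F z\<bar>
    \<le> Lam * real CARD('n)^2 * r"
  unfolding sym_mollify_symmetrize
proof (rule euler_defect_le)
  show "sym_mollify \<rho> r F differentiable (at z)"
    by (rule smooth_fun_differentiable[OF smooth_fun_sym_mollify[OF assms]])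
  show "\<bar>sym_mollify \<rho> r F (t *\<^sub>R z) - t * sym_mollify \<rho> r F z\<bar> \<le> Lam * real CARD('n)^2 * r * \<bar>t - 1\<bar>"
    if "t > 0" for t
    unfolding sym_mollify_def
    using mollify_homogeneity_defect[OF assms(5) continuous_on_F_symmetrize[OF assms(1-3)]
        F1_symmetrize_lipschitz[OF assms(1-3)] _ F2_symmetrize[OF assms(4)]] assms(1,2,6) that
    by simp
qed

theorem lemma4p8:
  fixes F :: "real^'n^'n \<Rightarrow> real" and lam Lam :: real
  assumes "0 < lam" and "lam \<le> Lam"
    and "F1 lam Lam F" and "F2 F" and "F3 F"
  shows "\<exists>Fe :: real \<Rightarrow> real^'n^'n \<Rightarrow> real.
     (\<forall>e>0. smooth_on_sym (Fe e) \<and> F1 lam Lam (Fe e) \<and> F3 (Fe e)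
        \<and> (\<forall>z\<in>sym_mats. \<bar>frechet_derivative (\<lambda>M. Fe e (symmetrize M)) (at z) z - Fe e z\<bar>
                         \<le> sqrt (real CARD('n)) * Lam * e))
   \<and> (\<forall>\<delta>>0. \<exists>e0>0. \<forall>e. 0 < e \<and> e < e0 \<longrightarrow> (\<forall>M\<in>sym_mats. \<bar>Fe e M - F M\<bar> \<le> \<delta>))
   \<and> (\<exists>L. \<forall>e>0. L-lipschitz_on sym_mats (Fe e))"
proof -
  obtain \<rho> :: "real^'n^'n \<Rightarrow> real" where \<rho>: "prob_bump \<rho>"
    using prob_bump_exists by blast
  define r where "r e = sqrt (real CARD('n)) * e / real CARD('n)^2" for e
  have r_pos: "r e > 0" if "e > 0" for e
    using that by (simp add: r_def)
  have Lam_r: "Lam * real CARD('n)^2 * r e = sqrt (real CARD('n)) * Lam * e" for e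
    by (simp add: r_def)
  define Fe where "Fe e = sym_mollify \<rho> (r e) F" for e
  have "\<forall>\<delta>>0. \<exists>e0>0. \<forall>e. 0 < e \<and> e < e0 \<longrightarrow> (\<forall>M\<in>sym_mats. \<bar>Fe e M - F M\<bar> \<le> \<delta>)"
    using sym_mollify_approx[OF assms(1-3) \<rho> less_imp_le[OF r_pos]] assms(1,2)
    by (intro uniformly_close_if_linear_bound[where C = "sqrt (real CARD('n)) * Lam"])
      (auto simp: Fe_def Lam_r)
  then show ?thesis
    using smooth_on_sym_sym_mollify[OF assms(1-4) \<rho> r_pos] F1_sym_mollify[OF assms(1-3) \<rho>]
      F3_sym_mollify[OF assms(1-3,5) \<rho>] sym_mollify_euler_defect[OF assms(1-4) \<rho> r_pos]
      lipschitz_on_sym_mollify[OF assms(1-3) \<rho>]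
    by (intro exI[of _ Fe] conjI exI[of _ "Lam * real CARD('n)^2"]) (simp_all add: Fe_def Lam_r)
qed

end
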